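(* Let $k\in\mathbb{N}$, $k>1$, $z\in\mathbb{Z}$ and $l,t\in\mathbb{Z}[1/k]$. Then the following are equivalent: (1) $l\cdot z=t$; (2) for every $n\in\mathbb{Z}$, $l\cdot(k^{nz}-1)\equiv t\cdot(k^n-1)\pmod{(k^n-1)^2}$ in the ring $\mathbb{Z}[1/k]$.
   Context: $\mathbb{Z}[1/k]=\{zk^i: z,i\in\mathbb{Z}\}\subseteq\mathbb{Q}$. *)

theory Defs
  imports Complex_Main
begin

definition Zinv :: "nat \<Rightarrow> rat set" where
  "Zinv k = {of_int z * (of_nat k) powi i | z i. True}"

definition congZinv :: "nat \<Rightarrow> rat \<Rightarrow> rat \<Rightarrow> rat \<Rightarrow> bool" where
  "congZinv k a b m \<longleftrightarrow> (\<exists>c\<in>Zinv k. a - b = c * m)"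

end

theory Submission
  imports Defs
begin

text \<open>For a unit \<open>x\<close> of \<open>Z[1/k]\<close>, such as \<open>x = k\<^sup>n\<close>, the first-order expansion
  \<open>x\<^sup>z \<equiv> 1 + z (x - 1) (mod (x - 1)\<^sup>2)\<close> holds in \<open>Z[1/k]\<close> (induction on \<open>z\<close> in both
  directions). So condition (2) is equivalent to \<open>(l z - t)(k\<^sup>n - 1) \<equiv> 0 (mod (k\<^sup>n - 1)\<^sup>2)\<close>,
  i.e. to \<open>k\<^sup>n - 1\<close> dividing \<open>l z - t\<close> for all \<open>n \<noteq> 0\<close>. Writing \<open>l z - t = r / k\<^sup>N\<close>, each
  \<open>k\<^sup>n - 1\<close> is coprime to \<open>k\<close> and hence divides the integer \<open>r\<close>; as \<open>k\<^sup>n - 1\<close> is unbounded,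
  \<open>r = 0\<close>.\<close>

lemma Zinv_iff_fraction:
  "q \<in> Zinv k \<longleftrightarrow> (\<exists>a N. q = of_int a / of_nat k ^ N)"
proof
  assume "q \<in> Zinv k"
  then obtain z i where q: "q = of_int z * of_nat k powi i"
    by (auto simp: Zinv_def)
  show "\<exists>a N. q = of_int a / of_nat k ^ N"
  proof (cases "i \<ge> 0")
    case True
    then have "q = of_int (z * int k ^ nat i) / of_nat k ^ 0"
      using q by (simp add: power_int_def)
    then show ?thesis by blast
  next
    case False
    then have "q = of_int z / of_nat k ^ nat (- i)"
      using q by (simp add: power_int_def divide_inverse power_inverse)
    then show ?thesis by blast
  qed
next
  assume "\<exists>a N. q = of_int a / of_nat k ^ N"
  then obtain a N where "q = of_int a / of_nat k ^ N" by blast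
  then have "q = of_int a * of_nat k powi (- int N)"
    by (simp add: power_int_minus divide_inverse)
  then show "q \<in> Zinv k" by (auto simp: Zinv_def)
qed

lemma Zinv_of_int [simp]: "of_int a \<in> Zinv k"
  using Zinv_iff_fraction[of _ k] by (metis div_by_1 power_0)

lemma Zinv_powi [simp]: "of_nat k powi i \<in> Zinv k"
  unfolding Zinv_def by (rule CollectI, rule exI[of _ 1], rule exI[of _ i]) simp

lemma Zinv_add:
  assumes "k > 0" "p \<in> Zinv k" "q \<in> Zinv k"
  shows "p + q \<in> Zinv k"
proof -
  obtain a N where p: "p = of_int a / of_nat k ^ N" using assms Zinv_iff_fraction by blast
  obtain b M where q: "q = of_int b / of_nat k ^ M" using assms Zinv_iff_fraction by blast
  have "p + q = of_int (a * int k ^ M + b * int k ^ N) / of_nat k ^ (N + M)"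
    using assms(1) by (simp add: p q field_simps power_add)
  then show ?thesis using Zinv_iff_fraction by blast
qed

lemma Zinv_mult:
  assumes "p \<in> Zinv k" "q \<in> Zinv k"
  shows "p * q \<in> Zinv k"
proof -
  obtain a N where p: "p = of_int a / of_nat k ^ N" using assms Zinv_iff_fraction by blast
  obtain b M where q: "q = of_int b / of_nat k ^ M" using assms Zinv_iff_fraction by blast
  have "p * q = of_int (a * b) / of_nat k ^ (N + M)"
    by (simp add: p q power_add)
  then show ?thesis using Zinv_iff_fraction by blast
qed

lemma Zinv_diff:
  assumes "k > 0" "p \<in> Zinv k" "q \<in> Zinv k"
  shows "p - q \<in> Zinv k"
  using Zinv_add[OF assms(1,2) Zinv_mult[OF Zinv_of_int[of "-1"] assms(3)]] by simp

lemma congZinv_sym: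
  assumes "congZinv k a b m"
  shows "congZinv k b a m"
proof -
  obtain c where "c \<in> Zinv k" "a - b = c * m" using assms by (auto simp: congZinv_def)
  then have "- c \<in> Zinv k" "b - a = - c * m"
    using Zinv_mult[OF Zinv_of_int[of "-1"]] by auto
  then show ?thesis unfolding congZinv_def by blast
qed

lemma congZinv_trans:
  assumes "k > 0" "congZinv k a b m" "congZinv k b c m"
  shows "congZinv k a c m"
proof -
  obtain d e where "d \<in> Zinv k" "a - b = d * m" "e \<in> Zinv k" "b - c = e * m"
    using assms(2,3) by (auto simp: congZinv_def)
  then have "d + e \<in> Zinv k" "a - c = (d + e) * m"
    using Zinv_add[OF assms(1)] by (auto simp: algebra_simps)
  then show ?thesis by (auto simp: congZinv_def)
qed

lemma congZinv_mult_left: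
  assumes "u \<in> Zinv k" "congZinv k a b m"
  shows "congZinv k (u * a) (u * b) m"
proof -
  obtain c where "c \<in> Zinv k" "a - b = c * m" using assms(2) by (auto simp: congZinv_def)
  then have "u * c \<in> Zinv k" "u * a - u * b = (u * c) * m"
    using Zinv_mult[OF assms(1)] by (auto simp: algebra_simps)
  then show ?thesis by (auto simp: congZinv_def)
qed

lemma congZinv_cancel_right:
  assumes "d \<noteq> 0" "congZinv k (a * d) (b * d) (m * d)"
  shows "congZinv k a b m"
proof -
  obtain c where "c \<in> Zinv k" "a * d - b * d = c * (m * d)"
    using assms(2) by (auto simp: congZinv_def)
  moreover from this have "(a - b) * d = (c * m) * d"
    by (simp add: algebra_simps)
  then have "a - b = c * m"
    using assms(1) by simp
  ultimately show ?thesis by (auto simp: congZinv_def)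
qed

lemma congZinv_powi_linear:
  assumes "k > 0" "x \<noteq> 0" "x \<in> Zinv k" "inverse x \<in> Zinv k"
  shows "congZinv k (x powi z - 1) (of_int z * (x - 1)) ((x - 1)^2)"
proof (induction z rule: int_induct[where k = 0])
  case base
  show ?case using Zinv_of_int[of 0 k] by (force simp: congZinv_def)
next
  case (step1 i)
  then obtain q where q: "q \<in> Zinv k" "x powi i = 1 + of_int i * (x - 1) + q * (x - 1)^2"
    by (auto simp: congZinv_def algebra_simps)
  have "x powi (i + 1) - 1 - of_int (i + 1) * (x - 1) = (x * q + of_int i) * (x - 1)^2"
    unfolding power_int_add_1[OF disjI1[OF assms(2)]] q(2)
    by (simp add: power2_eq_square algebra_simps)
  moreover have "x * q + of_int i \<in> Zinv k"
    using Zinv_add[OF assms(1) Zinv_mult[OF assms(3) q(1)] Zinv_of_int] .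
  ultimately show ?case by (auto simp: congZinv_def)
next
  case (step2 i)
  then obtain q where q: "q \<in> Zinv k" "x powi i = 1 + of_int i * (x - 1) + q * (x - 1)^2"
    by (auto simp: congZinv_def algebra_simps)
  have "x powi (i - 1) - 1 - of_int (i - 1) * (x - 1)
      = (inverse x * (q - of_int (i - 1))) * (x - 1)^2"
    using assms(2) by (simp add: power_int_diff q(2) power2_eq_square field_simps)
  moreover have "inverse x * (q - of_int (i - 1)) \<in> Zinv k"
    using Zinv_mult[OF assms(4) Zinv_diff[OF assms(1) q(1) Zinv_of_int]] .
  ultimately show ?case by (auto simp: congZinv_def)
qed

lemma congZinv_scaled_powi_linear:
  assumes "k > 0" "l \<in> Zinv k"
  shows "congZinv k (l * (of_nat k powi (n * z) - 1)) (l * of_int z * (of_nat k powi n - 1))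
           ((of_nat k powi n - 1)^2)"
proof -
  have "inverse (of_nat k powi n) \<in> Zinv k"
    using Zinv_powi[of k "- n"] by (simp add: power_int_minus)
  then have "congZinv k ((of_nat k powi n) powi z - 1) (of_int z * (of_nat k powi n - 1))
               ((of_nat k powi n - 1)^2)"
    using assms(1) by (intro congZinv_powi_linear) auto
  then show ?thesis
    unfolding power_int_mult mult.assoc by (rule congZinv_mult_left[OF assms(2)])
qed

lemma congZinv_mult_of_int_if_congZinv_powi:
  assumes "k > 1" "l \<in> Zinv k" "n \<noteq> 0"
    and cong: "congZinv k (l * (of_nat k powi (n * z) - 1)) (t * (of_nat k powi n - 1))
                 ((of_nat k powi n - 1)^2)"
  shows "congZinv k (l * of_int z) t (of_nat k powi n - 1)"
proof -
  define x :: rat where "x = of_nat k powi n"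
  have "x \<noteq> of_nat k powi 0"
    using power_int_strict_increasing[of n 0 "of_nat k :: rat"]
      power_int_strict_increasing[of 0 n "of_nat k :: rat"] assms(1,3)
    unfolding x_def by (cases "n < 0") auto
  then have "x \<noteq> 1" by simp
  from assms(1) have "k > 0" by simp
  have "congZinv k (l * of_int z * (x - 1)) (t * (x - 1)) ((x - 1) * (x - 1))"
    using congZinv_trans[OF \<open>k > 0\<close> congZinv_sym[OF congZinv_scaled_powi_linear] cong]
      \<open>k > 0\<close> assms(2)
    unfolding x_def power2_eq_square by blast
  then show ?thesis
    unfolding x_def[symmetric]
    by (rule congZinv_cancel_right[rotated]) (use \<open>x \<noteq> 1\<close> in simp)
qed

lemma dvd_if_congZinv_of_int:
  assumes "k > 0" "coprime d (int k)" "congZinv k (of_int a) 0 (of_int d)"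
  shows "d dvd a"
proof -
  obtain c where "c \<in> Zinv k" and c: "of_int a = c * of_int d"
    using assms(3) by (auto simp: congZinv_def)
  then obtain b M where "c = of_int b / of_nat k ^ M"
    using Zinv_iff_fraction by blast
  with c have "rat_of_int (a * int k ^ M) = of_int (b * d)"
    using assms(1) by (simp add: field_simps)
  then have "d dvd a * int k ^ M"
    by (metis dvd_triv_right of_int_eq_iff)
  moreover have "coprime d (int k ^ M)"
    using assms(2) by simp
  ultimately show ?thesis
    using coprime_dvd_mult_left_iff by blast
qed

lemma exists_power_minus_one_gt:
  fixes r :: int
  assumes "k > 1"
  shows "\<exists>m>0. r < int k ^ m - 1"
proof -
  define m where "m = nat r + 1"
  have "m < 2 ^ m" by (rule less_exp)
  also have "\<dots> \<le> k ^ m" using assms by (simp add: power_mono)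
  finally have "int m < int k ^ m" by (metis of_nat_less_iff of_nat_power)
  moreover have "r < int m" by (simp add: m_def)
  ultimately show ?thesis by (intro exI[of _ m]) (simp add: m_def)
qed

lemma eq_if_congZinv_power_minus_one:
  assumes "k > 1" "a \<in> Zinv k" "b \<in> Zinv k"
    and cong: "\<And>m. m > 0 \<Longrightarrow> congZinv k a b (of_nat k ^ m - 1)"
  shows "a = b"
proof -
  from assms(1) have "k > 0" by simp
  obtain r N where r: "a - b = of_int r / of_nat k ^ N"
    using Zinv_diff[OF \<open>k > 0\<close> assms(2,3)] Zinv_iff_fraction by blast
  obtain m where "m > 0" and m: "\<bar>r\<bar> < int k ^ m - 1"
    using exists_power_minus_one_gt[OF assms(1)] by blast
  obtain c where "c \<in> Zinv k" and c: "a - b = c * (of_nat k ^ m - 1)"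
    using cong[OF \<open>m > 0\<close>] by (auto simp: congZinv_def)
  have "of_int r = of_nat k ^ N * (a - b)"
    using r \<open>k > 0\<close> by simp
  also have "\<dots> = (of_nat k powi int N * c) * of_int (int k ^ m - 1)"
    by (simp add: c power_int_of_nat)
  finally have "of_int r = (of_nat k powi int N * c) * of_int (int k ^ m - 1)" .
  moreover have "of_nat k powi int N * c \<in> Zinv k"
    using Zinv_mult[OF Zinv_powi \<open>c \<in> Zinv k\<close>] .
  ultimately have "congZinv k (of_int r) 0 (of_int (int k ^ m - 1))"
    by (auto simp: congZinv_def)
  moreover have "coprime (int k ^ m - 1) (int k)"
    using coprime_diff_one_left[of "int k ^ m"] \<open>m > 0\<close> by simp
  ultimately have "(int k ^ m - 1) dvd r"
    using dvd_if_congZinv_of_int \<open>k > 0\<close> by blast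
  have "r = 0"
  proof (rule ccontr)
    assume "r \<noteq> 0"
    with \<open>(int k ^ m - 1) dvd r\<close> have "\<bar>int k ^ m - 1\<bar> \<le> \<bar>r\<bar>"
      by (rule dvd_imp_le_int[rotated])
    with m show False by linarith
  qed
  with r show ?thesis by simp
qed

theorem corollary3p2:
  fixes k :: nat and z :: int and l t :: rat
  assumes "k > 1" and "l \<in> Zinv k" and "t \<in> Zinv k"
  shows "l * of_int z = t \<longleftrightarrow>
    (\<forall>n::int. congZinv k (l * ((of_nat k) powi (n * z) - 1))
                          (t * ((of_nat k) powi n - 1))
                          (((of_nat k) powi n - 1)^2))"
proof
  assume "l * of_int z = t"
  with assms(1,2) show "\<forall>n. congZinv k (l * (of_nat k powi (n * z) - 1))
                        (t * (of_nat k powi n - 1)) ((of_nat k powi n - 1)^2)"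
    using congZinv_scaled_powi_linear[of k l] by auto
next
  assume cong: "\<forall>n. congZinv k (l * (of_nat k powi (n * z) - 1))
                        (t * (of_nat k powi n - 1)) ((of_nat k powi n - 1)^2)"
  have "congZinv k (l * of_int z) t (of_nat k ^ m - 1)" if "m > 0" for m
    using congZinv_mult_of_int_if_congZinv_powi[OF assms(1,2) _ cong[rule_format, of "int m"]] that
    by (simp add: power_int_of_nat)
  then show "l * of_int z = t"
    using eq_if_congZinv_power_minus_one[OF assms(1) Zinv_mult[OF assms(2) Zinv_of_int] assms(3)]
    by blast
qed

end
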